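(* Let $\varGamma=\sum_{j=1}^N\mathrm{graph}(g_j)$, where $g_1,\dots,g_N$ are rational maps (not necessarily distinct), and put $D=d_1(\varGamma)=\sum_j\deg g_j$. For every $n\in\mathbb{Z}_+$, the number of repelling fixed points of $\varGamma^{\circ n}$, counted according to multiplicity, is at most $D^n+N^n$.
   Context: The $n$-th iterate is $\varGamma^{\circ n}=\sum_{(j_1,\dots,j_n)}\mathrm{graph}(g_{j_n}\circ\cdots\circ g_{j_1})$. A point $x$ is a repelling fixed point of $\varGamma^{\circ n}$ if it is a repelling fixed point of some $g_{j_n}\circ\cdots\circ g_{j_1}$. Its multiplicity is the number of index sequences $(j_1,\dots,j_n)$ for which this holds. *)

theory Defs
  imports "HOL-Analysis.Analysis" "HOL-Computational_Algebra.Polynomial"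
begin

text \<open>The Riemann sphere is modelled as complex option: Some z is the finite
point z, None is the point at infinity.\<close>

type_synonym sphere = "complex option"

definition rat_eval :: "complex poly \<Rightarrow> complex poly \<Rightarrow> sphere \<Rightarrow> sphere" where
  "rat_eval p q x = (case x of
     Some z \<Rightarrow> (if poly q z = 0 then None else Some (poly p z / poly q z))
   | None \<Rightarrow> (let d = max (degree p) (degree q) in
              if coeff q d = 0 then None else Some (coeff p d / coeff q d)))"

definition rat_degree :: "complex poly \<Rightarrow> complex poly \<Rightarrow> nat" where
  "rat_degree p q = max (degree p) (degree q)"

text \<open>Standard local coordinates of the sphere centred at a point x:
  the identity chart near a finite point, and w = 1/z near infinity.\<close>
definition to_coord :: "sphere \<Rightarrow> sphere \<Rightarrow> complex" where
  "to_coord x y = (case x of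
      Some _ \<Rightarrow> (case y of Some v \<Rightarrow> v | None \<Rightarrow> 0)
    | None \<Rightarrow> (case y of Some v \<Rightarrow> 1 / v | None \<Rightarrow> 0))"

definition from_coord :: "sphere \<Rightarrow> complex \<Rightarrow> sphere" where
  "from_coord x w = (case x of
      Some _ \<Rightarrow> Some w
    | None \<Rightarrow> (if w = 0 then None else Some (1 / w)))"

definition repelling_fixed_point :: "(sphere \<Rightarrow> sphere) \<Rightarrow> sphere \<Rightarrow> bool" where
  "repelling_fixed_point f x \<longleftrightarrow> f x = x \<and>
     (\<exists>m. ((\<lambda>w. to_coord x (f (from_coord x w))) has_field_derivative m) (at (to_coord x x))
          \<and> norm m > 1)"

text \<open>For js = [j1,...,jn], compose g js = g jn o ... o g j1.\<close>
definition compose_seq :: "(nat \<Rightarrow> sphere \<Rightarrow> sphere) \<Rightarrow> nat list \<Rightarrow> sphere \<Rightarrow> sphere" where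
  "compose_seq g js = fold (\<lambda>j h. g j \<circ> h) js id"

text \<open>Repelling fixed points of the n-th iterate of the correspondence
  sum_j graph(g_j), j < N, each paired with an index sequence realising it
  (so the cardinality counts them with multiplicity).\<close>
definition repelling_pts_mult :: "(nat \<Rightarrow> sphere \<Rightarrow> sphere) \<Rightarrow> nat \<Rightarrow> nat \<Rightarrow> (sphere \<times> nat list) set" where
  "repelling_pts_mult g N n = {(x, js). length js = n \<and> set js \<subseteq> {..<N}
       \<and> repelling_fixed_point (compose_seq g js) x}"

end

theory Submission
  imports Defs
begin

text \<open>Each composite \<open>g\<^sub>j\<^sub>n \<circ> \<dots> \<circ> g\<^sub>j\<^sub>1\<close> is a rational map of degree
  \<open>d = d\<^sub>j\<^sub>1 \<cdots> d\<^sub>j\<^sub>n\<close>: substituting homogeneous representatives into each other gives a pair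
  of binary forms of degree \<open>d\<close> without common zero lifting it to \<open>\<complex>\<^sup>2\<close>. A map lifted by \<open>(A, B)\<close>
  either fixes every point or has at most \<open>d + 1\<close> fixed points, namely the roots of
  \<open>z B(z) - A(z)\<close> together possibly with \<open>\<infinity>\<close>; the identity has no repelling fixed point.
  Summing \<open>d\<^sub>j\<^sub>1 \<cdots> d\<^sub>j\<^sub>n + 1\<close> over all index sequences gives \<open>D\<^sup>n + N\<^sup>n\<close>.\<close>

lemma coeff_mult_at_degree_bounds:
  fixes f g :: "'a::idom poly"
  assumes "degree f \<le> a" "degree g \<le> b"
  shows "coeff (f * g) (a + b) = coeff f a * coeff g b"
proof (cases "degree f = a \<and> degree g = b")
  case True
  then show ?thesis using coeff_mult_degree_sum[of f g] by simp
next
  case False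
  then have "degree f < a \<or> degree g < b" using assms by auto
  moreover have "degree (f * g) \<le> degree f + degree g" by (rule degree_mult_le)
  ultimately have "degree (f * g) < a + b" using assms by linarith
  with \<open>degree f < a \<or> degree g < b\<close> show ?thesis by (auto simp: coeff_eq_0)
qed

lemma poly_altdef_degree_le:
  fixes f :: "'a::comm_semiring_1 poly"
  assumes "degree f \<le> a"
  shows "poly f z = (\<Sum>i\<le>a. coeff f i * z ^ i)"
  unfolding poly_altdef[of f]
  by (rule sum.mono_neutral_left) (use assms in \<open>auto simp: coeff_eq_0\<close>)

text \<open>Stated via
  the dehomogenized form so that multiplicativity is immediate; \<open>homog_expand\<close> gives the
  usual formula \<open>\<Sum> f\<^sub>i x\<^sup>i y\<^sup>a\<^sup>-\<^sup>i\<close>.\<close>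
definition homog :: "nat \<Rightarrow> 'a::field poly \<Rightarrow> 'a \<Rightarrow> 'a \<Rightarrow> 'a" where
  "homog a f x y = (if y = 0 then coeff f a * x ^ a else y ^ a * poly f (x / y))"

lemma homog_mult:
  assumes "degree f \<le> a" "degree g \<le> b"
  shows "homog (a + b) (f * g) x y = homog a f x y * homog b g x y"
  using coeff_mult_at_degree_bounds[OF assms] by (simp add: homog_def power_add)

lemma homog_add: "homog a (f + g) x y = homog a f x y + homog a g x y"
  by (simp add: homog_def algebra_simps)

lemma homog_smult: "homog a (smult c f) x y = c * homog a f x y"
  by (simp add: homog_def)

lemma homog_sum: "homog a (\<Sum>i\<in>S. F i) x y = (\<Sum>i\<in>S. homog a (F i) x y)"
  by (induction S rule: infinite_finite_induct) (simp_all add: homog_add homog_def[where f = 0])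

lemma degree_power_le_mult:
  assumes "degree f \<le> a"
  shows "degree (f ^ k) \<le> a * k"
  using degree_power_le[of f k] assms by (metis le_trans mult.commute mult_le_mono1)

lemma homog_power:
  assumes "degree f \<le> a"
  shows "homog (a * k) (f ^ k) x y = homog a f x y ^ k"
proof (induction k)
  case 0
  then show ?case by (simp add: homog_def)
next
  case (Suc k)
  have "homog (a + a * k) (f * f ^ k) x y = homog a f x y * homog (a * k) (f ^ k) x y"
    using assms degree_power_le_mult[OF assms] by (rule homog_mult)
  then show ?case using Suc by simp
qed

lemma homog_expand:
  assumes "degree f \<le> a"
  shows "homog a f x y = (\<Sum>i\<le>a. coeff f i * x ^ i * y ^ (a - i))"
proof (cases "y = 0")
  case True
  have "(\<Sum>i\<le>a. coeff f i * x ^ i * y ^ (a - i)) = (\<Sum>i\<in>{a}. coeff f i * x ^ i * y ^ (a - i))"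
    by (rule sum.mono_neutral_right) (use True in auto)
  then show ?thesis using True by (simp add: homog_def)
next
  case False
  have "homog a f x y = (\<Sum>i\<le>a. y ^ a * (coeff f i * (x / y) ^ i))"
    using False by (simp add: homog_def poly_altdef_degree_le[OF assms] sum_distrib_left)
  also have "\<dots> = (\<Sum>i\<le>a. coeff f i * x ^ i * y ^ (a - i))"
  proof (rule sum.cong)
    fix i assume "i \<in> {..a}"
    then have "y ^ a = y ^ i * y ^ (a - i)" by (simp flip: power_add)
    then show "y ^ a * (coeff f i * (x / y) ^ i) = coeff f i * x ^ i * y ^ (a - i)"
      using False by (simp add: power_divide field_simps)
  qed simp
  finally show ?thesis .
qed

text \<open>The polynomial whose degree \<open>a * b\<close> homogenization is the form \<open>H\<close> (of degree \<open>b\<close>)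
  evaluated at the pair of forms \<open>(A, B)\<close> (of degree \<open>a\<close>).\<close>
definition homog_subst :: "nat \<Rightarrow> 'a::field poly \<Rightarrow> 'a poly \<Rightarrow> 'a poly \<Rightarrow> 'a poly" where
  "homog_subst b H A B = (\<Sum>i\<le>b. smult (coeff H i) (A ^ i * B ^ (b - i)))"

lemma degree_power_mult_power_le:
  assumes "degree A \<le> a" "degree B \<le> a" "i \<le> b"
  shows "degree (A ^ i * B ^ (b - i)) \<le> a * b"
proof -
  have "degree (A ^ i * B ^ (b - i)) \<le> a * i + a * (b - i)"
    using degree_power_le_mult[OF assms(1)] degree_power_le_mult[OF assms(2)]
    by (intro order.trans[OF degree_mult_le] add_mono)
  also have "\<dots> = a * b" using assms(3) by (simp flip: add_mult_distrib2)
  finally show ?thesis .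
qed

lemma degree_homog_subst:
  assumes "degree A \<le> a" "degree B \<le> a"
  shows "degree (homog_subst b H A B) \<le> a * b"
  unfolding homog_subst_def
  by (intro degree_sum_le order.trans[OF degree_smult_le] degree_power_mult_power_le assms) auto

lemma homog_homog_subst:
  assumes "degree A \<le> a" "degree B \<le> a" "degree H \<le> b"
  shows "homog (a * b) (homog_subst b H A B) x y = homog b H (homog a A x y) (homog a B x y)"
proof -
  have "homog (a * b) (A ^ i * B ^ (b - i)) x y = homog a A x y ^ i * homog a B x y ^ (b - i)"
    if "i \<le> b" for i
  proof -
    have "degree (A ^ i) \<le> a * i" "degree (B ^ (b - i)) \<le> a * (b - i)"
      using assms(1,2) by (simp_all add: degree_power_le_mult)
    moreover have "a * b = a * i + a * (b - i)" using that by (simp flip: add_mult_distrib2)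
    ultimately show ?thesis using homog_mult homog_power assms(1,2) by metis
  qed
  then show ?thesis
    by (simp add: homog_subst_def homog_sum homog_smult homog_expand[OF assms(3)] mult.assoc)
qed

text \<open>The point \<open>[x : y]\<close> of the sphere; at the excluded point \<open>(0, 0)\<close> it is junk.\<close>
definition proj_point :: "complex \<Rightarrow> complex \<Rightarrow> sphere" where
  "proj_point x y = (if y = 0 then None else Some (x / y))"

definition homog_lift :: "(sphere \<Rightarrow> sphere) \<Rightarrow> nat \<Rightarrow> complex poly \<Rightarrow> complex poly \<Rightarrow> bool" where
  "homog_lift f d A B \<longleftrightarrow> degree A \<le> d \<and> degree B \<le> d \<and>
     (\<forall>x y. (x, y) \<noteq> (0, 0) \<longrightarrow> (homog d A x y, homog d B x y) \<noteq> (0, 0)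
        \<and> f (proj_point x y) = proj_point (homog d A x y) (homog d B x y))"

lemma homog_lift_comp:
  assumes f: "homog_lift f a A1 B1" and g: "homog_lift g b A2 B2"
  shows "homog_lift (g \<circ> f) (a * b) (homog_subst b A2 A1 B1) (homog_subst b B2 A1 B1)"
proof -
  have deg: "degree A1 \<le> a" "degree B1 \<le> a" "degree A2 \<le> b" "degree B2 \<le> b"
    using f g by (auto simp: homog_lift_def)
  show ?thesis
    using f g unfolding homog_lift_def
    by (simp add: degree_homog_subst homog_homog_subst deg)
qed

lemma homog_lift_id: "homog_lift id 1 [:0, 1:] 1"
  by (auto simp: homog_lift_def homog_def)

lemma coprime_max_degree_coeff:
  fixes p q :: "'a::field poly"
  assumes "coprime p q"
  shows "coeff p (max (degree p) (degree q)) \<noteq> 0 \<or> coeff q (max (degree p) (degree q)) \<noteq> 0"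
proof -
  have "p \<noteq> 0 \<or> q \<noteq> 0" using assms by auto
  then consider "p \<noteq> 0" "degree q \<le> degree p" | "q \<noteq> 0" "degree p \<le> degree q"
    by fastforce
  then show ?thesis
    by cases (simp_all add: max_def)
qed

lemma homog_lift_rat_eval:
  assumes "coprime p q"
  shows "homog_lift (rat_eval p q) (rat_degree p q) p q"
  unfolding homog_lift_def
proof (intro conjI allI impI)
  show "degree p \<le> rat_degree p q" "degree q \<le> rat_degree p q"
    by (auto simp: rat_degree_def)
  fix x y :: complex assume "(x, y) \<noteq> (0, 0)"
  then show "(homog (rat_degree p q) p x y, homog (rat_degree p q) q x y) \<noteq> (0, 0)"
    "rat_eval p q (proj_point x y)
       = proj_point (homog (rat_degree p q) p x y) (homog (rat_degree p q) q x y)"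
    using coprime_poly_0[OF assms, of "x / y"] coprime_max_degree_coeff[OF assms]
    by (auto simp: homog_def proj_point_def rat_eval_def rat_degree_def Let_def)
qed

lemma compose_seq_snoc: "compose_seq g (js @ [j]) = g j \<circ> compose_seq g js"
  by (simp add: compose_seq_def)

lemma homog_lift_compose_seq:
  assumes "\<And>j. j \<in> set js \<Longrightarrow> homog_lift (g j) (d j) (A j) (B j)"
  shows "\<exists>A' B'. homog_lift (compose_seq g js) (prod_list (map d js)) A' B'"
  using assms
proof (induction js rule: rev_induct)
  case Nil
  then show ?case using homog_lift_id by (auto simp: compose_seq_def id_def)
next
  case (snoc j js)
  then obtain A' B' where "homog_lift (compose_seq g js) (prod_list (map d js)) A' B'" by auto
  from homog_lift_comp[OF this snoc.prems[of j]] show ?case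
    unfolding compose_seq_snoc by (simp add: mult.commute del: comp_apply) blast
qed

lemma homog_lift_Some:
  assumes "homog_lift f d A B"
  shows "f (Some z) = proj_point (poly A z) (poly B z)" "(poly A z, poly B z) \<noteq> (0, 0)"
  using assms[unfolded homog_lift_def, THEN conjunct2, THEN conjunct2, rule_format, of z 1]
  by (simp_all add: proj_point_def homog_def)

lemma homog_lift_None:
  assumes "homog_lift f d A B"
  shows "f None = proj_point (coeff A d) (coeff B d)"
  using assms[unfolded homog_lift_def, THEN conjunct2, THEN conjunct2, rule_format, of 1 0]
  by (simp add: proj_point_def homog_def)

lemma not_repelling_fixed_point_if_fixes_finite:
  assumes "\<And>z. f (Some z) = Some z"
  shows "\<not> repelling_fixed_point f x"
proof
  assume "repelling_fixed_point f x"
  then obtain m where fx: "f x = x" and m: "norm m > 1"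
    and "((\<lambda>w. to_coord x (f (from_coord x w))) has_field_derivative m) (at (to_coord x x))"
    unfolding repelling_fixed_point_def by blast
  moreover have "(\<lambda>w. to_coord x (f (from_coord x w))) = (\<lambda>w. w)"
    using fx assms by (cases x) (auto simp: to_coord_def from_coord_def)
  ultimately have "m = 1" using DERIV_ident DERIV_unique by metis
  with m show False by simp
qed

text \<open>The finite fixed points are the roots of \<open>z B(z) - A(z)\<close>, a polynomial of degree
  \<open>\<le> d + 1\<close> whose degree drops to \<open>\<le> d\<close> exactly when \<open>\<infinity>\<close> is fixed.\<close>
lemma homog_lift_card_fixed_points:
  assumes lift: "homog_lift f d A B" and not_id: "\<exists>z. f (Some z) \<noteq> Some z"
  shows "finite {x. f x = x} \<and> card {x. f x = x} \<le> d + 1"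
proof -
  have dA: "degree A \<le> d" and dB: "degree B \<le> d" using lift by (auto simp: homog_lift_def)
  define R where "R = pCons 0 B - A"
  have poly_R: "poly R z = z * poly B z - poly A z" for z by (simp add: R_def)
  have "R \<noteq> 0"
  proof
    assume "R = 0"
    then have "f (Some z) = Some z" for z
      using homog_lift_Some[OF lift, of z] poly_R[of z] by (auto simp: proj_point_def field_simps)
    with not_id show False by blast
  qed
  define Z where "Z = {z. poly R z = 0}"
  have Z: "finite Z" "card Z \<le> degree R"
    unfolding Z_def using \<open>R \<noteq> 0\<close> by (simp_all add: poly_roots_finite card_poly_roots_bound)
  have "degree R \<le> d + 1" unfolding R_def
    using dA dB degree_pCons_le[of 0 B] by (intro degree_diff_le) auto
  have "coeff R (d + 1) = coeff B d" using dA by (simp add: R_def coeff_eq_0)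
  define S where "S = Some ` Z \<union> (if coeff B d = 0 then {None} else {})"
  have fixed_sub: "{x. f x = x} \<subseteq> S"
  proof
    fix x assume "x \<in> {x. f x = x}"
    then have fx: "f x = x" by simp
    show "x \<in> S"
    proof (cases x)
      case None
      then have "proj_point (coeff A d) (coeff B d) = None"
        using fx homog_lift_None[OF lift] by simp
      then show ?thesis using None by (simp add: S_def proj_point_def split: if_split_asm)
    next
      case (Some z)
      then have "poly B z \<noteq> 0" "poly A z / poly B z = z"
        using fx homog_lift_Some(1)[OF lift, of z] by (auto simp: proj_point_def split: if_splits)
      then have "poly R z = 0" by (simp add: poly_R field_simps)
      then show ?thesis using Some by (simp add: S_def Z_def)
    qed
  qed
  have "card S \<le> d + 1"
  proof (cases "coeff B d = 0")
    case True
    with \<open>coeff R (d + 1) = coeff B d\<close> \<open>R \<noteq> 0\<close> have "degree R \<noteq> d + 1"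
      by (metis leading_coeff_0_iff)
    with \<open>degree R \<le> d + 1\<close> have "degree R \<le> d" by simp
    have "card S \<le> card (Some ` Z) + card {None :: sphere}"
      using True card_Un_le[of "Some ` Z" "{None}"] by (simp add: S_def)
    then show ?thesis using card_image_le[OF Z(1), of Some] Z(2) \<open>degree R \<le> d\<close> by simp
  next
    case False
    then show ?thesis
      using card_image_le[OF Z(1), of Some] Z(2) \<open>degree R \<le> d + 1\<close> by (simp add: S_def)
  qed
  moreover have "finite S" using Z(1) by (simp add: S_def)
  ultimately show ?thesis using fixed_sub by (meson card_mono finite_subset le_trans)
qed

lemma homog_lift_card_repelling_fixed_points:
  assumes "homog_lift f d A B"
  shows "finite {x. repelling_fixed_point f x} \<and> card {x. repelling_fixed_point f x} \<le> d + 1"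
proof (cases "\<forall>z. f (Some z) = Some z")
  case True
  then show ?thesis using not_repelling_fixed_point_if_fixes_finite by simp
next
  case False
  have "{x. repelling_fixed_point f x} \<subseteq> {x. f x = x}"
    by (auto simp: repelling_fixed_point_def)
  with homog_lift_card_fixed_points[OF assms] False show ?thesis
    by (meson card_mono finite_subset le_trans)
qed

lemma sum_prod_list_lists_length_eq:
  fixes d :: "'b \<Rightarrow> 'a::comm_semiring_1"
  assumes "finite A"
  shows "(\<Sum>js\<in>{js. set js \<subseteq> A \<and> length js = n}. prod_list (map d js)) = (\<Sum>j\<in>A. d j) ^ n"
proof (induction n)
  case 0
  have "{js. set js \<subseteq> A \<and> length js = 0} = {[]}" by auto
  then show ?case by simp
next
  case (Suc n)
  let ?L = "\<lambda>n. {js. set js \<subseteq> A \<and> length js = n}"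
  have L_Suc: "?L (Suc n) = (\<lambda>(j, js). j # js) ` (A \<times> ?L n)"
    by (auto simp: image_iff length_Suc_conv)
  have "inj_on (\<lambda>(j, js). j # js) (A \<times> ?L n)" by (auto simp: inj_on_def)
  then have "(\<Sum>js\<in>?L (Suc n). prod_list (map d js)) = (\<Sum>(j, js)\<in>A \<times> ?L n. d j * prod_list (map d js))"
    unfolding L_Suc by (simp add: sum.reindex split_def)
  also have "\<dots> = (\<Sum>j\<in>A. d j) * (\<Sum>js\<in>?L n. prod_list (map d js))"
    by (simp add: sum.cartesian_product[symmetric] sum_product)
  finally show ?case using Suc by simp
qed

lemma repelling_pts_mult_eq_UN:
  "repelling_pts_mult g N n = (\<Union>js\<in>{js. set js \<subseteq> {..<N} \<and> length js = n}.
     (\<lambda>x. (x, js)) ` {x. repelling_fixed_point (compose_seq g js) x})"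
  by (auto simp: repelling_pts_mult_def)

lemma card_repelling_pts_mult_le:
  assumes "\<And>j. j < N \<Longrightarrow> homog_lift (g j) (d j) (A j) (B j)"
  shows "finite (repelling_pts_mult g N n)
    \<and> card (repelling_pts_mult g N n) \<le> (\<Sum>j<N. d j) ^ n + N ^ n"
proof -
  define L where "L = {js. set js \<subseteq> {..<N} \<and> length js = n}"
  define F where "F js = (\<lambda>x. (x, js)) ` {x. repelling_fixed_point (compose_seq g js) x}" for js
  have "finite L" unfolding L_def by (simp add: finite_lists_length_eq)
  have F: "finite (F js) \<and> card (F js) \<le> prod_list (map d js) + 1" if "js \<in> L" for js
  proof -
    obtain A' B' where "homog_lift (compose_seq g js) (prod_list (map d js)) A' B'"
      using homog_lift_compose_seq[of js g d A B] assms \<open>js \<in> L\<close> by (auto simp: L_def)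
    from homog_lift_card_repelling_fixed_points[OF this] show ?thesis
      unfolding F_def using card_image_le le_trans by blast
  qed
  have "card (\<Union>js\<in>L. F js) \<le> (\<Sum>js\<in>L. card (F js))"
    using \<open>finite L\<close> by (rule card_UN_le)
  also have "\<dots> \<le> (\<Sum>js\<in>L. prod_list (map d js) + 1)"
    using F by (intro sum_mono) blast
  also have "\<dots> = (\<Sum>js\<in>L. prod_list (map d js)) + card L"
    by (simp only: sum.distrib) simp
  also have "\<dots> = (\<Sum>j<N. d j) ^ n + N ^ n"
    unfolding L_def by (simp add: sum_prod_list_lists_length_eq card_lists_length_eq)
  finally show ?thesis
    using \<open>finite L\<close> F unfolding repelling_pts_mult_eq_UN L_def[symmetric] F_def[symmetric] by blast
qed

theorem mainTheorem7:
  fixes P Q :: "nat \<Rightarrow> complex poly" and N n D :: nat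
  assumes "\<And>j. j < N \<Longrightarrow> coprime (P j) (Q j)"
    and "D = (\<Sum>j<N. rat_degree (P j) (Q j))"
    and "n \<ge> 1"
  shows "finite (repelling_pts_mult (\<lambda>j. rat_eval (P j) (Q j)) N n)
    \<and> card (repelling_pts_mult (\<lambda>j. rat_eval (P j) (Q j)) N n) \<le> D ^ n + N ^ n"
proof -
  have "homog_lift (rat_eval (P j) (Q j)) (rat_degree (P j) (Q j)) (P j) (Q j)" if "j < N" for j
    using assms(1)[OF that] by (rule homog_lift_rat_eval)
  then show ?thesis unfolding assms(2) by (rule card_repelling_pts_mult_le)
qed

end
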